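(* Let $\|\cdot\|$ be a norm on $\mathbb{M}_n$. Then the class of all $M$-norms $\||\cdot\||$ on $\mathbb{M}_n$ with $\||A\||\le\|A\|$ for all $A\in\mathbb{M}_n$ has a maximum element.
   Context: $\mathbb{M}_n$ is the algebra of complex $n\times n$ matrices with identity $I$. A norm $\||\cdot\||$ on $\mathbb{M}_n$ is an $M$-norm if $\left\||\sum_{i=1}^k C_i^*X_iC_i\right\||\le \max_{1\le i\le k}\||X_i\||$ for all $k$, all $X_i\in\mathbb{M}_n$ and all $C_i\in\mathbb{M}_n$ with $\sum_{i=1}^k C_i^*C_i=I$. Inequalities between norms are pointwise. *)

theory Defs
  imports "HOL-Analysis.Analysis"
begin

definition adjoint_mat :: "complex^'n^'n \<Rightarrow> complex^'n^'n" where
  "adjoint_mat A = (\<chi> i j. cnj (A $ j $ i))"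

definition is_matrix_norm :: "(complex^'n^'n \<Rightarrow> real) \<Rightarrow> bool" where
  "is_matrix_norm N \<longleftrightarrow>
     (\<forall>A. 0 \<le> N A) \<and> (\<forall>A. N A = 0 \<longleftrightarrow> A = 0) \<and>
     (\<forall>c A. N (\<chi> i j. c * A $ i $ j) = cmod c * N A) \<and>
     (\<forall>A B. N (A + B) \<le> N A + N B)"

definition is_M_norm :: "(complex^'n^'n \<Rightarrow> real) \<Rightarrow> bool" where
  "is_M_norm N \<longleftrightarrow> is_matrix_norm N \<and>
     (\<forall>(k::nat) (X::nat \<Rightarrow> complex^'n^'n) (C::nat \<Rightarrow> complex^'n^'n).
        0 < k \<longrightarrow> (\<Sum>i<k. adjoint_mat (C i) ** C i) = mat 1 \<longrightarrow>
        N (\<Sum>i<k. adjoint_mat (C i) ** X i ** C i) \<le> Max ((\<lambda>i. N (X i)) ` {..<k}))"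

end

theory Submission
  imports Defs
begin

text \<open>The pointwise supremum of a nonempty family of M-norms that is bounded above is again
  an M-norm, so the supremum of all M-norms below the given norm is the maximum, provided
  at least one such M-norm exists. A witness is a small multiple of the numerical radius
  \<open>w(A) = sup |\<langle>x, A x\<rangle>| / \<parallel>x\<parallel>\<^sup>2\<close>: it is an M-norm because
  \<open>\<langle>x, (\<Sum> C\<^sub>i\<^sup>* X\<^sub>i C\<^sub>i) x\<rangle> = \<Sum> \<langle>C\<^sub>i x, X\<^sub>i C\<^sub>i x\<rangle>\<close> with \<open>\<Sum> \<parallel>C\<^sub>i x\<parallel>\<^sup>2 = \<parallel>x\<parallel>\<^sup>2\<close>, and it is dominated by
  a multiple of every norm since all norms on the finite-dimensional matrix space are
  equivalent.\<close>

definition cinner :: "complex^'n \<Rightarrow> complex^'n \<Rightarrow> complex" where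
  "cinner x y = (\<Sum>j\<in>UNIV. cnj (x$j) * y$j)"

definition quad_form :: "complex^'n^'n \<Rightarrow> complex^'n \<Rightarrow> complex" where
  "quad_form A x = cinner x (A *v x)"

lemma cinner_add_right: "cinner x (y + z) = cinner x y + cinner x z"
  unfolding cinner_def by (simp add: distrib_left sum.distrib)

lemma norm_vec_power2: "(norm x)\<^sup>2 = (\<Sum>j\<in>UNIV. (norm (x$j))\<^sup>2)"
  unfolding norm_vec_def L2_set_def by (simp add: sum_nonneg)

lemma cinner_self: "cinner x x = of_real ((norm x)\<^sup>2)"
proof -
  have "cnj (x$j) * x$j = of_real ((cmod (x$j))\<^sup>2)" for j
    using complex_norm_square[of "x$j"] by (simp add: mult.commute)
  then show ?thesis
    unfolding cinner_def norm_vec_power2 by simp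
qed

lemma cinner_adjoint_mat: "cinner x (adjoint_mat C *v y) = cinner (C *v x) y"
proof -
  have "cinner x (adjoint_mat C *v y) = (\<Sum>j\<in>UNIV. \<Sum>l\<in>UNIV. cnj (x$j) * (cnj (C$l$j) * y$l))"
    unfolding cinner_def adjoint_mat_def matrix_vector_mult_def by (simp add: sum_distrib_left)
  also have "\<dots> = (\<Sum>l\<in>UNIV. \<Sum>j\<in>UNIV. cnj (x$j) * (cnj (C$l$j) * y$l))"
    by (rule sum.swap)
  also have "\<dots> = cinner (C *v x) y"
    unfolding cinner_def matrix_vector_mult_def by (simp add: sum_distrib_left sum_distrib_right mult_ac)
  finally show ?thesis .
qed

lemma cinner_axis_mat: "cinner (axis i 1) (A *v axis j 1) = A$i$j"
  unfolding cinner_def axis_def matrix_vector_mult_def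
  by (simp add: if_distrib[of "\<lambda>t. _ * t"] if_distrib[of cnj] if_distrib[of "\<lambda>t. t * _"] cong: if_cong)

lemma quad_form_add: "quad_form (A + B) x = quad_form A x + quad_form B x"
  unfolding quad_form_def by (simp add: matrix_vector_mult_add_rdistrib cinner_add_right)

lemma quad_form_sum: "quad_form (\<Sum>i\<in>I. A i) x = (\<Sum>i\<in>I. quad_form (A i) x)"
proof (induction I rule: infinite_finite_induct)
  case (infinite I)
  then show ?case by (simp add: quad_form_def cinner_def matrix_vector_mult_def)
next
  case empty
  then show ?case by (simp add: quad_form_def cinner_def matrix_vector_mult_def)
next
  case (insert i I)
  then show ?case by (simp add: quad_form_add)
qed

lemma quad_form_mat_1: "quad_form (mat 1) x = of_real ((norm x)\<^sup>2)"
  by (simp add: quad_form_def cinner_self)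

lemma quad_form_congruence: "quad_form (adjoint_mat C ** X ** C) x = quad_form X (C *v x)"
  unfolding quad_form_def by (simp add: matrix_vector_mul_assoc[symmetric] cinner_adjoint_mat)

lemma quad_form_expand: "quad_form A x = (\<Sum>j\<in>UNIV. \<Sum>l\<in>UNIV. cnj (x$j) * A$j$l * x$l)"
  unfolding quad_form_def cinner_def matrix_vector_mult_def by (simp add: sum_distrib_left mult_ac)

lemma quad_form_scale: "quad_form (\<chi> i j. c * A$i$j) x = c * quad_form A x"
  unfolding quad_form_expand by (simp add: sum_distrib_left mult_ac)

lemma quad_form_polarization:
  "quad_form A (x + c *s y) =
     quad_form A x + c * cinner x (A *v y) + cnj c * cinner y (A *v x) + cnj c * c * quad_form A y"
  unfolding quad_form_def cinner_def matrix_vector_mult_def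
  by (simp add: algebra_simps sum.distrib sum_distrib_left)

lemma quad_form_eq_0_imp_eq_0:
  assumes "\<And>x. quad_form A x = 0"
  shows "A = 0"
proof -
  have "A$i$j = 0" for i j
  proof -
    have "c * A$i$j + cnj c * A$j$i = 0" for c
      using quad_form_polarization[of A "axis i 1" c "axis j 1"] assms by (simp add: cinner_axis_mat)
    \<comment> \<open>\<open>c = 1\<close> and \<open>c = \<i>\<close> separate \<open>A$i$j\<close> from \<open>A$j$i\<close>\<close>
    from this[of 1] this[of \<i>] show ?thesis by (simp add: algebra_simps)
  qed
  then show ?thesis by (simp add: vec_eq_iff)
qed

lemma quad_form_bound: "cmod (quad_form A x) \<le> real CARD('n) ^ 2 * norm A * (norm x)\<^sup>2"
  for A :: "complex^'n^'n"
proof -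
  have term_bound: "cmod (cnj (x$j) * A$j$l * x$l) \<le> norm A * (norm x)\<^sup>2" for j l
  proof -
    have "cmod (A$j$l) \<le> norm A"
      by (rule order_trans[OF Finite_Cartesian_Product.norm_nth_le
            Finite_Cartesian_Product.norm_nth_le])
    then have "cmod (x$j) * cmod (A$j$l) * cmod (x$l) \<le> norm x * norm A * norm x"
      by (intro mult_mono Finite_Cartesian_Product.norm_nth_le) auto
    then show ?thesis by (simp add: norm_mult power2_eq_square mult_ac)
  qed
  have "cmod (quad_form A x) \<le> (\<Sum>j\<in>UNIV. \<Sum>l\<in>UNIV. cmod (cnj (x$j) * A$j$l * x$l))"
    unfolding quad_form_expand by (rule order_trans[OF norm_sum sum_mono[OF norm_sum]])
  also have "\<dots> \<le> (\<Sum>j\<in>(UNIV::'n set). \<Sum>l\<in>(UNIV::'n set). norm A * (norm x)\<^sup>2)"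
    by (intro sum_mono term_bound)
  also have "\<dots> = real CARD('n) ^ 2 * norm A * (norm x)\<^sup>2"
    by (simp add: power2_eq_square)
  finally show ?thesis .
qed

definition numerical_radius :: "complex^'n^'n \<Rightarrow> real" where
  "numerical_radius A = (SUP x\<in>-{0}. cmod (quad_form A x) / (norm x)\<^sup>2)"

lemma numerical_radius_upper: "cmod (quad_form A x) \<le> numerical_radius A * (norm x)\<^sup>2"
  for A :: "complex^'n^'n"
proof (cases "x = 0")
  case True
  then show ?thesis by (simp add: quad_form_def cinner_def)
next
  case False
  have bdd: "bdd_above ((\<lambda>x. cmod (quad_form A x) / (norm x)\<^sup>2) ` (-{0}))"
    by (rule bdd_aboveI2[where M = "real CARD('n) ^ 2 * norm A"])
       (simp add: divide_le_eq quad_form_bound)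
  have "cmod (quad_form A x) / (norm x)\<^sup>2 \<le> numerical_radius A"
    unfolding numerical_radius_def using False by (intro cSUP_upper[OF _ bdd]) auto
  then show ?thesis using False by (simp add: divide_le_eq)
qed

lemma numerical_radius_least:
  assumes "\<And>x. cmod (quad_form A x) \<le> t * (norm x)\<^sup>2"
  shows "numerical_radius (A :: complex^'n^'n) \<le> t"
  unfolding numerical_radius_def
proof (rule cSUP_least)
  have "(1 :: complex^'n) \<noteq> 0" by (simp add: vec_eq_iff)
  then show "-{0 :: complex^'n} \<noteq> {}" by blast
next
  fix x :: "complex^'n" assume "x \<in> -{0}"
  then show "cmod (quad_form A x) / (norm x)\<^sup>2 \<le> t" using assms by (simp add: divide_le_eq)
qed

lemma numerical_radius_nonneg: "0 \<le> numerical_radius (A :: complex^'n^'n)"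
proof -
  have "0 \<le> numerical_radius A * (norm (1 :: complex^'n))\<^sup>2"
    by (rule order_trans[OF norm_ge_zero numerical_radius_upper])
  moreover have "(1 :: complex^'n) \<noteq> 0" by (simp add: vec_eq_iff)
  ultimately show ?thesis by (simp add: zero_le_mult_iff)
qed

lemma numerical_radius_triangle: "numerical_radius (A + B) \<le> numerical_radius A + numerical_radius B"
proof (rule numerical_radius_least)
  fix x
  have "cmod (quad_form (A + B) x) \<le> cmod (quad_form A x) + cmod (quad_form B x)"
    by (simp add: quad_form_add norm_triangle_ineq)
  also have "\<dots> \<le> numerical_radius A * (norm x)\<^sup>2 + numerical_radius B * (norm x)\<^sup>2"
    by (intro add_mono numerical_radius_upper)
  finally show "cmod (quad_form (A + B) x) \<le> (numerical_radius A + numerical_radius B) * (norm x)\<^sup>2"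
    by (simp add: algebra_simps)
qed

lemma numerical_radius_scale_le:
  "numerical_radius (\<chi> i j. c * A$i$j) \<le> cmod c * numerical_radius A"
proof (rule numerical_radius_least)
  fix x
  have "cmod (quad_form (\<chi> i j. c * A$i$j) x) = cmod c * cmod (quad_form A x)"
    by (simp add: quad_form_scale norm_mult)
  also have "\<dots> \<le> cmod c * (numerical_radius A * (norm x)\<^sup>2)"
    by (intro mult_left_mono numerical_radius_upper) auto
  finally show "cmod (quad_form (\<chi> i j. c * A$i$j) x) \<le> cmod c * numerical_radius A * (norm x)\<^sup>2"
    by (simp add: mult_ac)
qed

lemma numerical_radius_eq_0_iff: "numerical_radius A = 0 \<longleftrightarrow> A = 0"
proof
  assume "numerical_radius A = 0"
  then show "A = 0"
    using numerical_radius_upper[of A] by (intro quad_form_eq_0_imp_eq_0) simp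
next
  assume "A = 0"
  then have "numerical_radius A \<le> 0"
    by (intro numerical_radius_least) (simp add: quad_form_def cinner_def)
  then show "numerical_radius A = 0" using numerical_radius_nonneg[of A] by simp
qed

lemma numerical_radius_le_norm: "numerical_radius A \<le> real CARD('n) ^ 2 * norm A"
  for A :: "complex^'n^'n"
  by (rule numerical_radius_least) (rule quad_form_bound)

lemma numerical_radius_compressions_le:
  fixes X C :: "nat \<Rightarrow> complex^'n^'n"
  assumes unital: "(\<Sum>i<k. adjoint_mat (C i) ** C i) = mat 1"
  shows "numerical_radius (\<Sum>i<k. adjoint_mat (C i) ** X i ** C i)
           \<le> Max ((\<lambda>i. numerical_radius (X i)) ` {..<k})"
proof (rule numerical_radius_least)
  fix x
  let ?w = "Max ((\<lambda>i. numerical_radius (X i)) ` {..<k})"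
  have "quad_form (adjoint_mat (C i) ** C i) x = of_real ((norm (C i *v x))\<^sup>2)" for i
    using quad_form_congruence[of "C i" "mat 1" x] by (simp add: quad_form_mat_1)
  then have "of_real (\<Sum>i<k. (norm (C i *v x))\<^sup>2) = (\<Sum>i<k. quad_form (adjoint_mat (C i) ** C i) x)"
    by simp
  also have "\<dots> = of_real ((norm x)\<^sup>2)"
    using unital by (simp add: quad_form_sum[symmetric] quad_form_mat_1)
  finally have partition: "(\<Sum>i<k. (norm (C i *v x))\<^sup>2) = (norm x)\<^sup>2"
    by (simp only: of_real_eq_iff)
  have "cmod (quad_form (\<Sum>i<k. adjoint_mat (C i) ** X i ** C i) x)
          = cmod (\<Sum>i<k. quad_form (X i) (C i *v x))"
    by (simp add: quad_form_sum quad_form_congruence)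
  also have "\<dots> \<le> (\<Sum>i<k. cmod (quad_form (X i) (C i *v x)))" by (rule norm_sum)
  also have "\<dots> \<le> (\<Sum>i<k. ?w * (norm (C i *v x))\<^sup>2)"
  proof (rule sum_mono)
    fix i assume "i \<in> {..<k}"
    then have "numerical_radius (X i) \<le> ?w" by (intro Max_ge) auto
    then show "cmod (quad_form (X i) (C i *v x)) \<le> ?w * (norm (C i *v x))\<^sup>2"
      by (rule order_trans[OF numerical_radius_upper mult_right_mono]) simp
  qed
  also have "\<dots> = ?w * (norm x)\<^sup>2" by (simp add: sum_distrib_left[symmetric] partition)
  finally show "cmod (quad_form (\<Sum>i<k. adjoint_mat (C i) ** X i ** C i) x)
      \<le> ?w * (norm x)\<^sup>2" .
qed

lemma scale_eq_if_scale_le: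
  fixes f :: "complex^'n^'n \<Rightarrow> real"
  assumes nonneg: "\<And>A. 0 \<le> f A"
    and scale_le: "\<And>c A. f (\<chi> i j. c * A$i$j) \<le> cmod c * f A"
  shows "f (\<chi> i j. c * A$i$j) = cmod c * f A"
proof (cases "c = 0")
  case True
  then show ?thesis using scale_le[of c A] nonneg[of "\<chi> i j. c * A$i$j"] by simp
next
  case False
  have "A = (\<chi> i j. inverse c * (\<chi> i j. c * A$i$j)$i$j)" using False by (simp add: vec_eq_iff)
  then have "f A \<le> inverse (cmod c) * f (\<chi> i j. c * A$i$j)"
    using scale_le[of "inverse c" "\<chi> i j. c * A$i$j"] by (simp add: norm_inverse)
  then have "cmod c * f A \<le> f (\<chi> i j. c * A$i$j)"
    using False by (simp add: field_simps)
  then show ?thesis using scale_le[of c A] by simp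
qed

lemma is_matrix_norm_numerical_radius: "is_matrix_norm numerical_radius"
  unfolding is_matrix_norm_def
  using numerical_radius_nonneg numerical_radius_eq_0_iff numerical_radius_triangle
    scale_eq_if_scale_le[OF numerical_radius_nonneg numerical_radius_scale_le]
  by blast

lemma is_M_norm_numerical_radius: "is_M_norm numerical_radius"
  unfolding is_M_norm_def
  using is_matrix_norm_numerical_radius numerical_radius_compressions_le by blast

lemma is_matrix_norm_scaleR:
  assumes "is_matrix_norm N"
  shows "N (r *\<^sub>R A) = \<bar>r\<bar> * N A"
proof -
  have "(r *\<^sub>R A)$i$j = of_real r * A$i$j" for i j
    using scaleR_conv_of_real[of r "A$i$j"] by simp
  then have "r *\<^sub>R A = (\<chi> i j. of_real r * A$i$j)" by (simp add: vec_eq_iff)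
  then show ?thesis using assms unfolding is_matrix_norm_def by simp
qed

lemma is_matrix_norm_continuous:
  assumes "is_matrix_norm N"
  shows "continuous_on UNIV N"
proof (rule convex_on_continuous)
  show "convex_on UNIV N"
  proof (rule convex_onI)
    fix t :: real and A B assume t: "0 < t" "t < 1"
    have "N ((1 - t) *\<^sub>R A + t *\<^sub>R B) \<le> N ((1 - t) *\<^sub>R A) + N (t *\<^sub>R B)"
      using assms unfolding is_matrix_norm_def by blast
    also have "\<dots> = (1 - t) * N A + t * N B" using t by (simp add: is_matrix_norm_scaleR[OF assms])
    finally show "N ((1 - t) *\<^sub>R A + t *\<^sub>R B) \<le> (1 - t) * N A + t * N B" .
  qed simp
qed simp

lemma is_matrix_norm_ge_norm:
  fixes N :: "complex^'n^'n \<Rightarrow> real"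
  assumes N: "is_matrix_norm N"
  shows "\<exists>m>0. \<forall>A. m * norm A \<le> N A"
proof -
  have "sphere (0 :: complex^'n^'n) 1 \<noteq> {}" by simp
  then obtain A0 where A0: "A0 \<in> sphere 0 1" "\<And>B. B \<in> sphere 0 1 \<Longrightarrow> N A0 \<le> N B"
    using continuous_attains_inf[OF compact_sphere _
        continuous_on_subset[OF is_matrix_norm_continuous[OF N]]]
    by blast
  have "A0 \<noteq> 0" using A0(1) by auto
  then have pos: "0 < N A0" using N unfolding is_matrix_norm_def by (metis order_le_less)
  have "N A0 * norm A \<le> N A" for A
  proof (cases "A = 0")
    case True
    then show ?thesis using N unfolding is_matrix_norm_def by simp
  next
    case False
    then have "N A0 \<le> N (inverse (norm A) *\<^sub>R A)" by (intro A0(2)) simp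
    also have "\<dots> = inverse (norm A) * N A" by (simp add: is_matrix_norm_scaleR[OF N])
    finally show ?thesis using False by (simp add: field_simps)
  qed
  then show ?thesis using pos by blast
qed

lemma is_M_norm_scale:
  fixes M :: "complex^'n^'n \<Rightarrow> real"
  assumes M: "is_M_norm M" and c: "0 < c"
  shows "is_M_norm (\<lambda>A. c * M A)"
  unfolding is_M_norm_def is_matrix_norm_def
proof (intro conjI allI impI)
  fix A B :: "complex^'n^'n" and d
  have "is_matrix_norm M" using M unfolding is_M_norm_def by simp
  then have "0 \<le> M A" "M A = 0 \<longleftrightarrow> A = 0" "M (\<chi> i j. d * A$i$j) = cmod d * M A"
    "M (A + B) \<le> M A + M B"
    unfolding is_matrix_norm_def by blast+
  then show "0 \<le> c * M A" "(c * M A = 0) = (A = 0)"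
    "c * M (\<chi> i j. d * A$i$j) = cmod d * (c * M A)" "c * M (A + B) \<le> c * M A + c * M B"
    using c by (simp_all add: distrib_left[symmetric])
next
  fix k :: nat and X C :: "nat \<Rightarrow> complex^'n^'n"
  assume k: "0 < k" and unital: "(\<Sum>i<k. adjoint_mat (C i) ** C i) = mat 1"
  have "c * M (\<Sum>i<k. adjoint_mat (C i) ** X i ** C i) \<le> c * Max ((\<lambda>i. M (X i)) ` {..<k})"
    using M k unital c unfolding is_M_norm_def by simp
  also have "\<dots> = Max ((\<lambda>i. c * M (X i)) ` {..<k})"
    using k c by (subst mono_Max_commute) (auto simp: mono_def image_image)
  finally show "c * M (\<Sum>i<k. adjoint_mat (C i) ** X i ** C i)
      \<le> Max ((\<lambda>i. c * M (X i)) ` {..<k})" .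
qed

lemma ex_M_norm_le:
  fixes N :: "complex^'n^'n \<Rightarrow> real"
  assumes N: "is_matrix_norm N"
  shows "\<exists>M. is_M_norm M \<and> (\<forall>A. M A \<le> N A)"
proof -
  obtain m where m: "0 < m" "\<And>A. m * norm A \<le> N A" using is_matrix_norm_ge_norm[OF N] by blast
  define c where "c = m / real CARD('n) ^ 2"
  have c: "0 < c" using m by (simp add: c_def)
  have "c * numerical_radius A \<le> N A" for A
  proof -
    have "c * numerical_radius A \<le> c * (real CARD('n) ^ 2 * norm A)"
      using c by (intro mult_left_mono numerical_radius_le_norm) auto
    also have "\<dots> = m * norm A" by (simp add: c_def)
    finally show ?thesis using m(2)[of A] by linarith
  qed
  then show ?thesis using is_M_norm_scale[OF is_M_norm_numerical_radius c] by blast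
qed

lemma is_M_norm_SUP:
  fixes S :: "(complex^'n^'n \<Rightarrow> real) set"
  assumes nonempty: "S \<noteq> {}" and M_norms: "\<And>M. M \<in> S \<Longrightarrow> is_M_norm M"
    and bounded: "\<And>A. bdd_above ((\<lambda>M. M A) ` S)"
  shows "is_M_norm (\<lambda>A. SUP M\<in>S. M A)"
proof -
  define M0 where "M0 A = (SUP M\<in>S. M A)" for A
  have upper: "M A \<le> M0 A" if "M \<in> S" for M A
    unfolding M0_def using that by (rule cSUP_upper[OF _ bounded])
  have least: "M0 A \<le> t" if "\<And>M. M \<in> S \<Longrightarrow> M A \<le> t" for A t
    unfolding M0_def using nonempty that by (rule cSUP_least)
  have norm: "0 \<le> M A" "M A = 0 \<longleftrightarrow> A = 0" "M (\<chi> i j. c * A$i$j) = cmod c * M A"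
    "M (A + B) \<le> M A + M B" if "M \<in> S" for M A B c
    using M_norms[OF that] unfolding is_M_norm_def is_matrix_norm_def by blast+
  obtain M1 where M1: "M1 \<in> S" using nonempty by blast
  have nonneg: "0 \<le> M0 A" for A
    using norm(1)[OF M1, of A] upper[OF M1, of A] by linarith
  have scale_le: "M0 (\<chi> i j. c * A$i$j) \<le> cmod c * M0 A" for c A
    by (rule least) (simp add: norm(3) mult_left_mono upper)
  have "M0 A = 0 \<longleftrightarrow> A = 0" for A
  proof
    assume "M0 A = 0"
    then show "A = 0" using norm(1,2)[OF M1, of A] upper[OF M1, of A] by linarith
  next
    assume "A = 0"
    have "M0 A \<le> 0"
    proof (rule least)
      fix M assume "M \<in> S"
      then show "M A \<le> 0" using norm(2)[of M A] \<open>A = 0\<close> by simp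
    qed
    then show "M0 A = 0" using nonneg[of A] by linarith
  qed
  moreover have "M0 (A + B) \<le> M0 A + M0 B" for A B
  proof (rule least)
    fix M assume "M \<in> S"
    then show "M (A + B) \<le> M0 A + M0 B"
      using norm(4)[of M A B] upper[of M A] upper[of M B] by linarith
  qed
  moreover have "M0 (\<Sum>i<k. adjoint_mat (C i) ** X i ** C i) \<le> Max ((\<lambda>i. M0 (X i)) ` {..<k})"
    if k: "0 < k" and unital: "(\<Sum>i<k. adjoint_mat (C i) ** C i) = mat 1"
    for k :: nat and X C :: "nat \<Rightarrow> complex^'n^'n"
  proof (rule least)
    fix M assume M: "M \<in> S"
    have "M (\<Sum>i<k. adjoint_mat (C i) ** X i ** C i) \<le> Max ((\<lambda>i. M (X i)) ` {..<k})"
      using M_norms[OF M] k unital unfolding is_M_norm_def by blast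
    also have "\<dots> \<le> Max ((\<lambda>i. M0 (X i)) ` {..<k})"
      using k by (intro Max.boundedI) (auto intro: order_trans[OF upper[OF M] Max_ge])
    finally show "M (\<Sum>i<k. adjoint_mat (C i) ** X i ** C i)
        \<le> Max ((\<lambda>i. M0 (X i)) ` {..<k})" .
  qed
  ultimately show ?thesis
    unfolding M0_def[symmetric] is_M_norm_def is_matrix_norm_def
    using nonneg scale_eq_if_scale_le[OF nonneg scale_le] by blast
qed

theorem corollary3p2:
  fixes N :: "complex^'n^'n \<Rightarrow> real"
  assumes "is_matrix_norm N"
  shows "\<exists>M0. is_M_norm M0 \<and> (\<forall>A. M0 A \<le> N A) \<and>
           (\<forall>M. is_M_norm M \<and> (\<forall>A. M A \<le> N A) \<longrightarrow> (\<forall>A. M A \<le> M0 A))"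
proof -
  define S where "S = {M. is_M_norm M \<and> (\<forall>A. M A \<le> N A)}"
  have nonempty: "S \<noteq> {}" using ex_M_norm_le[OF assms] by (simp add: S_def)
  have bounded: "bdd_above ((\<lambda>M. M A) ` S)" for A
    by (rule bdd_aboveI2[of _ _ "N A"]) (simp add: S_def)
  have "is_M_norm (\<lambda>A. SUP M\<in>S. M A)"
    by (rule is_M_norm_SUP[OF nonempty _ bounded]) (simp add: S_def)
  moreover have "(SUP M\<in>S. M A) \<le> N A" for A
    using nonempty by (rule cSUP_least) (simp add: S_def)
  moreover have "M A \<le> (SUP M\<in>S. M A)" if "M \<in> S" for M A
    using that bounded by (rule cSUP_upper)
  ultimately show ?thesis unfolding S_def by blast
qed

end
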